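(* Let $P=(p_1,\dots,p_n)$ be points in $\mathbb{R}^d$, $k\ge1$, and $\mathcal{F}$ a constraint for $k$-CMedian. Let $\lambda\ge1$ and let $\mathcal{C}=\{c_1,\dots,c_k\}$ be the centers (median points) of a $\lambda$-approximate solution of the ordinary (unconstrained) $k$-median problem on $P$. Then $[\mathcal{C}]^k=\mathcal{C}\times\cdots\times\mathcal{C}$ contains a $k$-tuple $(q_1,\dots,q_k)$ for which some $(S_1,\dots,S_k)\in\mathcal{F}$ satisfies $\frac1n\sum_{j=1}^k\sum_{i\in S_j}\|p_i-q_j\|\le(3\lambda+2)\mu_{opt}$.
   Context: A constraint for $k$-CMedian is a nonempty family $\mathcal{F}$ of ordered partitions $(S_1,\dots,S_k)$ of $\{1,\dots,n\}$ into $k$ parts; $\mu_{opt}=\min_{(S_j)\in\mathcal{F}}\min_{c'_1,\dots,c'_k\in\mathbb{R}^d}\frac1n\sum_j\sum_{i\in S_j}\|p_i-c'_j\|$. The unconstrained $k$-median cost of a $k$-point set $\mathcal{C}$ is $\omega=\frac1n\sum_i\min_{c\in\mathcal{C}}\|p_i-c\|$, and $\mathcal{C}$ is $\lambda$-approximate if $\omega$ is at most $\lambda$ times the minimum of this cost over all $k$-point sets. *)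

theory Defs
  imports "HOL-Analysis.Analysis"
begin

text \<open>Points are p 1, ..., p n in R^d (index type 'd). An ordered partition
  (S_1,...,S_k) of {1..n} is a function S :: nat => nat set, only its values
  on {1..k} being relevant.\<close>

definition ordered_partition :: "nat \<Rightarrow> nat \<Rightarrow> (nat \<Rightarrow> nat set) \<Rightarrow> bool" where
  "ordered_partition n k S \<longleftrightarrow>
     (\<forall>j\<in>{1..k}. S j \<subseteq> {1..n}) \<and> (\<forall>i\<in>{1..n}. \<exists>!j. j \<in> {1..k} \<and> i \<in> S j)"

definition is_constraint :: "nat \<Rightarrow> nat \<Rightarrow> (nat \<Rightarrow> nat set) set \<Rightarrow> bool" where
  "is_constraint n k F \<longleftrightarrow> F \<noteq> {} \<and> (\<forall>S\<in>F. ordered_partition n k S)"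

definition cmed_cost :: "(nat \<Rightarrow> real^'d) \<Rightarrow> nat \<Rightarrow> nat \<Rightarrow> (nat \<Rightarrow> nat set) \<Rightarrow> (nat \<Rightarrow> real^'d) \<Rightarrow> real" where
  "cmed_cost p n k S c = (1 / real n) * (\<Sum>j=1..k. \<Sum>i\<in>S j. norm (p i - c j))"

definition mu_opt :: "(nat \<Rightarrow> real^'d) \<Rightarrow> nat \<Rightarrow> nat \<Rightarrow> (nat \<Rightarrow> nat set) set \<Rightarrow> real" where
  "mu_opt p n k F = Inf {cmed_cost p n k S c | S c. S \<in> F}"

definition kmed_cost :: "(nat \<Rightarrow> real^'d) \<Rightarrow> nat \<Rightarrow> (real^'d) set \<Rightarrow> real" where
  "kmed_cost p n C = (1 / real n) * (\<Sum>i=1..n. Min ((\<lambda>c. norm (p i - c)) ` C))"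

definition approx_kmedian :: "(nat \<Rightarrow> real^'d) \<Rightarrow> nat \<Rightarrow> nat \<Rightarrow> real \<Rightarrow> (real^'d) set \<Rightarrow> bool" where
  "approx_kmedian p n k lam C \<longleftrightarrow>
     finite C \<and> card C = k \<and>
     kmed_cost p n C \<le> lam * Inf {kmed_cost p n D | D. finite D \<and> card D = k}"

end

theory Submission
  imports Defs
begin

text \<open>Move each centre c_j of a constrained solution (S, c) to its nearest point q_j of C.
  For a point p_i of S_j, with a the point of C nearest to p_i, the triangle inequality gives
  ||p_i - q_j|| \<le> ||p_i - c_j|| + ||c_j - a|| \<le> 2 ||p_i - c_j|| + ||p_i - a||, so the cost
  of (S, q) is at most twice that of (S, c) plus the k-median cost of C. The latter is at
  most lam times the k-median cost of any k-point set containing the c_j, which is at most the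
  cost of (S, c). Hence the centres from C give cost at most (lam + 2) times that of any
  feasible solution. Since the constrained optimum need not be attained, we take the best of
  the finitely many costs achieved with centres from C.\<close>

lemma sum_ordered_partition:
  assumes "ordered_partition n k S"
  shows "(\<Sum>j=1..k. \<Sum>i\<in>S j. f i) = (\<Sum>i=1..n. f i)"
proof -
  have sub: "\<forall>j\<in>{1..k}. S j \<subseteq> {1..n}" and uniq: "\<forall>i\<in>{1..n}. \<exists>!j. j \<in> {1..k} \<and> i \<in> S j"
    using assms unfolding ordered_partition_def by auto
  have "finite (S j)" if "j \<in> {1..k}" for j
    using sub that finite_subset by blast
  moreover have "S a \<inter> S b = {}" if "a \<in> {1..k}" "b \<in> {1..k}" "a \<noteq> b" for a b
    using sub uniq that by blast
  moreover have "\<Union>(S ` {1..k}) = {1..n}"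
    using sub uniq by blast
  ultimately show ?thesis
    using sum.UNION_disjoint[of "{1..k}" S f] by simp
qed

lemma dist_le_via_closest_point:
  assumes closest: "\<And>a. a \<in> C \<Longrightarrow> dist c q \<le> dist c a" and "a \<in> C"
  shows "dist x q \<le> 2 * dist x c + dist x a"
proof -
  have "dist x q \<le> dist x c + dist c q" by (rule dist_triangle)
  also have "\<dots> \<le> dist x c + dist c a" using closest \<open>a \<in> C\<close> by simp
  also have "\<dots> \<le> dist x c + (dist c x + dist x a)" using dist_triangle by simp
  finally show ?thesis by (simp add: dist_commute)
qed

lemma ex_finite_card_superset:
  assumes "infinite (UNIV :: 'a set)" and "finite (A :: 'a set)" and "card A \<le> k"
  obtains D where "finite D" "card D = k" "A \<subseteq> D"
proof -
  obtain B where B: "finite B" "card B = k - card A" "A \<inter> B = {}"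
    using finite_arbitrarily_large_disj[OF assms(1,2)] by blast
  then have "card (A \<union> B) = k"
    using assms(2,3) by (simp add: card_Un_disjoint)
  then show thesis
    using that[of "A \<union> B"] B assms(2) by blast
qed

lemma cmed_cost_nonneg: "cmed_cost p n k S c \<ge> 0"
  unfolding cmed_cost_def by (intro mult_nonneg_nonneg sum_nonneg) auto

lemma kmed_cost_nonneg:
  assumes "finite D" "D \<noteq> {}"
  shows "kmed_cost p n D \<ge> 0"
  unfolding kmed_cost_def using assms by (intro mult_nonneg_nonneg sum_nonneg) auto

lemma mu_opt_nonneg:
  assumes "F \<noteq> {}"
  shows "mu_opt p n k F \<ge> 0"
  unfolding mu_opt_def using assms by (intro cInf_greatest) (auto simp: cmed_cost_nonneg)

lemma kmed_cost_le_cmed_cost: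
  assumes "ordered_partition n k S" and "finite D" and "c ` {1..k} \<subseteq> D"
  shows "kmed_cost p n D \<le> cmed_cost p n k S c"
proof -
  have "(\<Sum>i=1..n. Min ((\<lambda>d. norm (p i - d)) ` D))
      = (\<Sum>j=1..k. \<Sum>i\<in>S j. Min ((\<lambda>d. norm (p i - d)) ` D))"
    by (rule sum_ordered_partition[OF assms(1), symmetric])
  also have "\<dots> \<le> (\<Sum>j=1..k. \<Sum>i\<in>S j. norm (p i - c j))"
    using assms(2,3) by (intro sum_mono Min_le) (auto simp: image_subset_iff)
  finally show ?thesis
    unfolding cmed_cost_def kmed_cost_def by (simp add: divide_right_mono)
qed

lemma kmedian_Inf_le_cmed_cost:
  fixes p :: "nat \<Rightarrow> real^'d"
  assumes "k \<ge> 1" and "ordered_partition n k S"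
  shows "Inf {kmed_cost p n D | D. finite D \<and> card D = k} \<le> cmed_cost p n k S c"
proof -
  have "infinite (UNIV :: (real^'d) set)"
    by (intro infinite_UNIV_vec infinite_UNIV_char_0)
  moreover have "card (c ` {1..k}) \<le> k"
    using card_image_le[of "{1..k}" c] by simp
  ultimately obtain D where D: "finite D" "card D = k" "c ` {1..k} \<subseteq> D"
    using ex_finite_card_superset[OF _ finite_imageI[OF finite_atLeastAtMost]] by blast
  have "bdd_below {kmed_cost p n D | D. finite D \<and> card D = k}"
    using \<open>k \<ge> 1\<close> by (intro bdd_belowI[of _ 0]) (auto intro!: kmed_cost_nonneg)
  then have "Inf {kmed_cost p n D | D. finite D \<and> card D = k} \<le> kmed_cost p n D"
    using D by (intro cInf_lower) auto
  also have "\<dots> \<le> cmed_cost p n k S c"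
    using kmed_cost_le_cmed_cost[OF assms(2) D(1,3)] .
  finally show ?thesis .
qed

lemma cmed_cost_closest_centers_le:
  assumes "ordered_partition n k S" and "finite C" "C \<noteq> {}"
    and closest: "\<And>j a. a \<in> C \<Longrightarrow> dist (c j) (q j) \<le> dist (c j) a"
  shows "cmed_cost p n k S q \<le> 2 * cmed_cost p n k S c + kmed_cost p n C"
proof -
  define nearest where "nearest x = Min ((\<lambda>a. norm (x - a)) ` C)" for x
  have "\<exists>a\<in>C. norm (x - a) = nearest x" for x
  proof -
    have "nearest x \<in> (\<lambda>a. norm (x - a)) ` C"
      unfolding nearest_def using assms(2,3) by (intro Min_in) auto
    then show ?thesis by force
  qed
  then have pointwise: "norm (p i - q j) \<le> 2 * norm (p i - c j) + nearest (p i)" for i j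
    using dist_le_via_closest_point[OF closest] by (metis dist_norm)
  have "(\<Sum>j=1..k. \<Sum>i\<in>S j. norm (p i - q j))
      \<le> (\<Sum>j=1..k. \<Sum>i\<in>S j. 2 * norm (p i - c j) + nearest (p i))"
    by (intro sum_mono pointwise)
  also have "\<dots> = 2 * (\<Sum>j=1..k. \<Sum>i\<in>S j. norm (p i - c j)) + (\<Sum>i=1..n. nearest (p i))"
    using sum_ordered_partition[OF assms(1)] by (simp add: sum.distrib sum_distrib_left)
  finally show ?thesis
    unfolding cmed_cost_def kmed_cost_def nearest_def
    by (simp add: divide_right_mono add_divide_distrib[symmetric])
qed

lemma ex_centers_in_approx_kmedian:
  fixes p :: "nat \<Rightarrow> real^'d"
  assumes "k \<ge> 1" and "ordered_partition n k S" and "lam \<ge> 0"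
    and "approx_kmedian p n k lam C"
  obtains q where "\<forall>j. q j \<in> C" "cmed_cost p n k S q \<le> (lam + 2) * cmed_cost p n k S c"
proof -
  have C: "finite C" "C \<noteq> {}"
    using assms(1,4) unfolding approx_kmedian_def by auto
  have "\<exists>q. q \<in> C \<and> (\<forall>a\<in>C. dist (c j) q \<le> dist (c j) a)" for j
    using distance_attains_inf[OF finite_imp_closed[OF C(1)] C(2), of "c j"] by metis
  then obtain q where q: "\<And>j. q j \<in> C" "\<And>j a. a \<in> C \<Longrightarrow> dist (c j) (q j) \<le> dist (c j) a"
    by metis
  have "kmed_cost p n C \<le> lam * Inf {kmed_cost p n D | D. finite D \<and> card D = k}"
    using assms(4) unfolding approx_kmedian_def by blast
  also have "\<dots> \<le> lam * cmed_cost p n k S c"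
    using kmedian_Inf_le_cmed_cost[OF assms(1,2)] assms(3) by (rule mult_left_mono)
  finally have "cmed_cost p n k S q \<le> (lam + 2) * cmed_cost p n k S c"
    using cmed_cost_closest_centers_le[where c = c and q = q and p = p, OF assms(2) C q(2)]
    by (simp add: algebra_simps)
  with q(1) show thesis using that by blast
qed

lemma cmed_cost_restrict:
  "cmed_cost p n k S q = cmed_cost p n k (restrict S {1..k}) (restrict q {1..k})"
  unfolding cmed_cost_def by (intro arg_cong[where f = "\<lambda>x. _ * x"] sum.cong) auto

lemma finite_cmed_costs_with_centers_in:
  assumes "is_constraint n k F" and "finite C"
  shows "finite {cmed_cost p n k S q | S q. S \<in> F \<and> (\<forall>j\<in>{1..k}. q j \<in> C)}"
proof (rule finite_subset)
  let ?cost = "\<lambda>(T, r). cmed_cost p n k T r"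
  let ?dom = "({1..k} \<rightarrow>\<^sub>E Pow {1..n}) \<times> ({1..k} \<rightarrow>\<^sub>E C)"
  show "finite (?cost ` ?dom)"
    using assms(2) by (intro finite_imageI finite_cartesian_product finite_PiE) auto
  show "{cmed_cost p n k S q | S q. S \<in> F \<and> (\<forall>j\<in>{1..k}. q j \<in> C)} \<subseteq> ?cost ` ?dom"
  proof clarify
    fix S q assume "S \<in> F" "\<forall>j\<in>{1..k}. q j \<in> C"
    then have "(restrict S {1..k}, restrict q {1..k}) \<in> ?dom"
      using assms(1) unfolding is_constraint_def ordered_partition_def by auto
    moreover have "cmed_cost p n k S q = ?cost (restrict S {1..k}, restrict q {1..k})"
      using cmed_cost_restrict by simp
    ultimately show "cmed_cost p n k S q \<in> ?cost ` ?dom"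
      by (intro image_eqI)
  qed
qed

lemma ex_min_cmed_cost_with_centers_in:
  assumes "is_constraint n k F" and "finite C" "C \<noteq> {}"
  obtains S q where "S \<in> F" "\<forall>j\<in>{1..k}. q j \<in> C"
    "\<And>S' q'. S' \<in> F \<Longrightarrow> \<forall>j\<in>{1..k}. q' j \<in> C \<Longrightarrow> cmed_cost p n k S q \<le> cmed_cost p n k S' q'"
proof -
  define V where "V = {cmed_cost p n k S q | S q. S \<in> F \<and> (\<forall>j\<in>{1..k}. q j \<in> C)}"
  have "finite V"
    unfolding V_def by (rule finite_cmed_costs_with_centers_in[OF assms(1,2)])
  obtain S0 c0 where "S0 \<in> F" "c0 \<in> C"
    using assms(1,3) unfolding is_constraint_def by blast
  then have "cmed_cost p n k S0 (\<lambda>_. c0) \<in> V"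
    unfolding V_def by auto
  with \<open>finite V\<close> have "Min V \<in> V"
    by (intro Min_in) auto
  then obtain S q where "S \<in> F" "\<forall>j\<in>{1..k}. q j \<in> C" "cmed_cost p n k S q = Min V"
    unfolding V_def by auto
  moreover have "Min V \<le> cmed_cost p n k S' q'" if "S' \<in> F" "\<forall>j\<in>{1..k}. q' j \<in> C" for S' q'
    using \<open>finite V\<close> that unfolding V_def by (intro Min_le) auto
  ultimately show thesis
    using that by metis
qed

lemma le_mu_opt:
  assumes "F \<noteq> {}" and "a > 0" and "\<And>S c. S \<in> F \<Longrightarrow> m \<le> a * cmed_cost p n k S c"
  shows "m \<le> a * mu_opt p n k F"
proof -
  have "m / a \<le> mu_opt p n k F"
    unfolding mu_opt_def
  proof (rule cInf_greatest)
    show "{cmed_cost p n k S c | S c. S \<in> F} \<noteq> {}"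
      using assms(1) by blast
  next
    fix x assume "x \<in> {cmed_cost p n k S c | S c. S \<in> F}"
    then obtain S c where "S \<in> F" "x = cmed_cost p n k S c" by blast
    then show "m / a \<le> x"
      using assms(2,3) by (simp add: divide_le_eq mult.commute)
  qed
  then show ?thesis
    using assms(2) by (simp add: divide_le_eq mult.commute)
qed

theorem theorem11:
  fixes p :: "nat \<Rightarrow> real^'d" and n k :: nat and F :: "(nat \<Rightarrow> nat set) set"
    and lam :: real and C :: "(real^'d) set"
  assumes "k \<ge> 1"
    and "is_constraint n k F"
    and "lam \<ge> 1"
    and "approx_kmedian p n k lam C"
  shows "\<exists>q :: nat \<Rightarrow> real^'d. (\<forall>j\<in>{1..k}. q j \<in> C) \<and>
           (\<exists>S\<in>F. cmed_cost p n k S q \<le> (3 * lam + 2) * mu_opt p n k F)"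
proof -
  have F: "F \<noteq> {}" "\<And>S. S \<in> F \<Longrightarrow> ordered_partition n k S"
    using assms(2) unfolding is_constraint_def by auto
  have C: "finite C" "C \<noteq> {}"
    using assms(1,4) unfolding approx_kmedian_def by auto
  obtain S q where S: "S \<in> F" and q: "\<forall>j\<in>{1..k}. q j \<in> C"
    and minimal: "\<And>S' q'. S' \<in> F \<Longrightarrow> \<forall>j\<in>{1..k}. q' j \<in> C \<Longrightarrow> cmed_cost p n k S q \<le> cmed_cost p n k S' q'"
    using ex_min_cmed_cost_with_centers_in[OF assms(2) C] by metis
  have "cmed_cost p n k S q \<le> (lam + 2) * mu_opt p n k F"
  proof (rule le_mu_opt[OF F(1)])
    fix S' c assume "S' \<in> F"
    then obtain q' where q': "\<forall>j. q' j \<in> C" "cmed_cost p n k S' q' \<le> (lam + 2) * cmed_cost p n k S' c"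
      using ex_centers_in_approx_kmedian[OF assms(1) F(2) _ assms(4)] assms(3) by auto
    have "cmed_cost p n k S q \<le> cmed_cost p n k S' q'"
      using minimal \<open>S' \<in> F\<close> q'(1) by blast
    also note q'(2)
    finally show "cmed_cost p n k S q \<le> (lam + 2) * cmed_cost p n k S' c" .
  qed (use assms(3) in simp)
  also have "\<dots> \<le> (3 * lam + 2) * mu_opt p n k F"
    using mu_opt_nonneg[OF F(1)] assms(3) by (intro mult_right_mono) auto
  finally show ?thesis
    using S q by (intro exI[of _ q] conjI bexI[of _ S])
qed

end
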